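(* For every $G\subseteq A$ and every $\varphi\in\mathcal{L}_{CoRGAL}$, the formula $\langle[G]\rangle\langle[G]\rangle\varphi\rightarrow[\langle A\setminus G\rangle]\varphi$ is valid.
   Context: Fix a finite set $A$ of agents and a countable set $P$ of propositional variables. The language $\mathcal{L}_{CoRGAL}$ is given by $\varphi ::= p \mid \neg\varphi \mid (\varphi\wedge\varphi) \mid K_a\varphi \mid [\varphi]\varphi \mid [G,\varphi]\varphi \mid [\langle G\rangle]\varphi$ with $p\in P$, $a\in A$, $G\subseteq A$. $\mathcal{L}_{EL}$ is the fragment built only from $p,\neg,\wedge,K_a$. Duals: $\langle\psi\rangle\varphi:=\neg[\psi]\neg\varphi$, $\langle[G]\rangle\varphi:=\neg[\langle G\rangle]\neg\varphi$. For $G\subseteq A$, $\mathcal{L}^G_{EL}$ is the set of formulas $\bigwedge_{i\in G}K_i\varphi_i$ with each $\varphi_i\in\mathcal{L}_{EL}$; $\psi_G,\chi_G$ range over $\mathcal{L}^G_{EL}$. Epistemic models $M=(W,\sim,V)$: $W\neq\emptyset$, each $\sim_a$ an equivalence relation, $V:P\to\mathcal{P}(W)$; $M^\varphi$ is the restriction of $M$ to $\{v:(M,v)\models\varphi\}$. Semantics: standard for $p,\neg,\wedge,K_a$; $(M,w)\models[\varphi]\psi$ iff $(M,w)\models\varphi$ implies $(M^\varphi,w)\models\psi$; $(M,w)\models[G,\chi]\varphi$ iff $(M,w)\models\chi$ and for all $\psi_G$, $(M,w)\models[\psi_G\wedge\chi]\varphi$; $(M,w)\models[\langle G\rangle]\varphi$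 iff for every $\psi_G$ there is $\chi_{A\setminus G}$ with $(M,w)\models\psi_G\to\langle\psi_G\wedge\chi_{A\setminus G}\rangle\varphi$. Thus $(M,w)\models\langle[G]\rangle\varphi$ iff there is $\psi_G$ such that for all $\chi_{A\setminus G}$, $(M,w)\models\psi_G\wedge[\psi_G\wedge\chi_{A\setminus G}]\varphi$. A formula is valid if true at every pointed model. *)

theory Defs
  imports Main "HOL-Library.Countable"
begin

(* 'p : propositional variables, 'a : agents (the finite set A is UNIV :: 'a set) *)
datatype ('p, 'a) fm =
    Atom 'p
  | Neg "('p, 'a) fm"
  | Conj "('p, 'a) fm" "('p, 'a) fm"
  | K 'a "('p, 'a) fm"
  | Ann "('p, 'a) fm" "('p, 'a) fm"
  | GAnn "'a set" "('p, 'a) fm" "('p, 'a) fm"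
  | CoAnn "'a set" "('p, 'a) fm"             (* [<G>] phi *)

definition Imp :: "('p, 'a) fm \<Rightarrow> ('p, 'a) fm \<Rightarrow> ('p, 'a) fm" where
  "Imp \<phi> \<psi> = Neg (Conj \<phi> (Neg \<psi>))"

(* dual <[G]> phi := not [<G>] not phi *)
definition DCoAnn :: "'a set \<Rightarrow> ('p, 'a) fm \<Rightarrow> ('p, 'a) fm" where
  "DCoAnn G \<phi> = Neg (CoAnn G (Neg \<phi>))"

primrec is_EL :: "('p, 'a) fm \<Rightarrow> bool" where
  "is_EL (Atom p) = True"
| "is_EL (Neg \<phi>) = is_EL \<phi>"
| "is_EL (Conj \<phi> \<psi>) = (is_EL \<phi> \<and> is_EL \<psi>)"
| "is_EL (K a \<phi>) = is_EL \<phi>"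
| "is_EL (Ann \<phi> \<psi>) = False"
| "is_EL (GAnn G \<chi> \<phi>) = False"
| "is_EL (CoAnn G \<phi>) = False"

record ('w, 'a, 'p) kmodel =
  W :: "'w set"
  Rel :: "'a \<Rightarrow> ('w \<times> 'w) set"
  Val :: "'p \<Rightarrow> 'w set"

definition is_model :: "('w, 'a, 'p) kmodel \<Rightarrow> bool" where
  "is_model M \<longleftrightarrow> W M \<noteq> {} \<and> (\<forall>a. equiv (W M) (Rel M a))"

definition restrict :: "('w, 'a, 'p) kmodel \<Rightarrow> 'w set \<Rightarrow> ('w, 'a, 'p) kmodel" where
  "restrict M S = \<lparr> W = W M \<inter> S, Rel = (\<lambda>a. Rel M a \<inter> ((W M \<inter> S) \<times> (W M \<inter> S))),
                    Val = (\<lambda>p. Val M p \<inter> S) \<rparr>"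

(* semantics of epistemic formulas (only the static clauses matter; it is applied to L_EL formulas) *)
primrec sat_EL :: "('w, 'a, 'p) kmodel \<Rightarrow> 'w \<Rightarrow> ('p, 'a) fm \<Rightarrow> bool" where
  "sat_EL M w (Atom p) = (w \<in> Val M p)"
| "sat_EL M w (Neg \<phi>) = (\<not> sat_EL M w \<phi>)"
| "sat_EL M w (Conj \<phi> \<psi>) = (sat_EL M w \<phi> \<and> sat_EL M w \<psi>)"
| "sat_EL M w (K a \<phi>) = (\<forall>v \<in> W M. (w, v) \<in> Rel M a \<longrightarrow> sat_EL M v \<phi>)"
| "sat_EL M w (Ann \<phi> \<psi>) = False"
| "sat_EL M w (GAnn G \<chi> \<phi>) = False"
| "sat_EL M w (CoAnn G \<phi>) = False"

(* A formula psi_G in L^G_EL, i.e. /\_{i in G} K_i phi_i, is represented by the family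
   phis :: 'a => fm (with phis i in L_EL for i in G); its truth value is: *)
definition sat_G :: "('w, 'a, 'p) kmodel \<Rightarrow> 'w \<Rightarrow> 'a set \<Rightarrow> ('a \<Rightarrow> ('p, 'a) fm) \<Rightarrow> bool" where
  "sat_G M w G phis \<longleftrightarrow> (\<forall>i \<in> G. sat_EL M w (K i (phis i)))"

definition EL_family :: "'a set \<Rightarrow> ('a \<Rightarrow> ('p, 'a) fm) \<Rightarrow> bool" where
  "EL_family G phis \<longleftrightarrow> (\<forall>i \<in> G. is_EL (phis i))"

primrec sat :: "('w, 'a, 'p) kmodel \<Rightarrow> 'w \<Rightarrow> ('p, 'a) fm \<Rightarrow> bool" where
  "sat M w (Atom p) = (w \<in> Val M p)"
| "sat M w (Neg \<phi>) = (\<not> sat M w \<phi>)"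
| "sat M w (Conj \<phi> \<psi>) = (sat M w \<phi> \<and> sat M w \<psi>)"
| "sat M w (K a \<phi>) = (\<forall>v \<in> W M. (w, v) \<in> Rel M a \<longrightarrow> sat M v \<phi>)"
| "sat M w (Ann \<phi> \<psi>) =
     (sat M w \<phi> \<longrightarrow> sat (restrict M {v. sat M v \<phi>}) w \<psi>)"
| "sat M w (GAnn G \<chi> \<phi>) =
     (sat M w \<chi> \<and>
      (\<forall>phis. EL_family G phis \<longrightarrow>
         ((sat_G M w G phis \<and> sat M w \<chi>) \<longrightarrow>
          sat (restrict M {v. sat_G M v G phis \<and> sat M v \<chi>}) w \<phi>)))"
| "sat M w (CoAnn G \<phi>) =
     (\<forall>phis. EL_family G phis \<longrightarrow>
       (\<exists>chis. EL_family (- G) chis \<and>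
          (sat_G M w G phis \<longrightarrow>
             (sat_G M w G phis \<and> sat_G M w (- G) chis \<and>
              sat (restrict M {v. sat_G M v G phis \<and> sat_G M v (- G) chis}) w \<phi>))))"

definition valid :: "'w itself \<Rightarrow> ('p, 'a) fm \<Rightarrow> bool" where
  "valid (_ :: 'w itself) \<phi> \<longleftrightarrow> (\<forall>(M :: ('w, 'a, 'p) kmodel) w. is_model M \<and> w \<in> W M \<longrightarrow> sat M w \<phi>)"

end

theory Submission
  imports Defs
begin

text \<open>Fix \<open>\<chi>\<close> for the coalition \<open>A \<setminus> G\<close>. The outer \<open>\<langle>[G]\<rangle>\<close> yields an announcement \<open>\<psi>\<close>
  of \<open>G\<close> after which, whatever \<open>A \<setminus> G\<close> says (in particular \<open>\<chi>\<close>), \<open>\<langle>[G]\<rangle>\<phi>\<close> holds; the inner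
  \<open>\<langle>[G]\<rangle>\<close>, instantiated with the trivial counter-announcement, yields a second announcement
  \<open>\<psi>\<^sub>2\<close> of \<open>G\<close> after which \<open>\<phi>\<close> holds. Both successive announcements of \<open>G\<close> are merged into
  one: with \<open>\<theta> = \<psi> \<and> \<chi>\<close>, the formula \<open>\<And>\<^sub>i\<^sub>\<in>\<^sub>G K\<^sub>i(\<psi>\<^sub>i \<and> (\<psi>\<^sub>2\<^sub>,\<^sub>i)\<^sup>\<theta>)\<close>, where \<open>(\<cdot>)\<^sup>\<theta>\<close> is the
  relativisation expressing \<open>[\<theta>]\<cdot>\<close> in epistemic logic, is again an announcement of \<open>G\<close>, and
  announcing it together with \<open>\<chi>\<close> has the same effect as announcing \<open>\<psi> \<and> \<chi>\<close> and then \<open>\<psi>\<^sub>2\<close>.\<close>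

definition top :: "('p, 'a) fm" where
  "top = Neg (Conj (Atom undefined) (Neg (Atom undefined)))"

lemma sat_EL_top [simp]: "sat_EL M v top" and is_EL_top [simp]: "is_EL top"
  by (auto simp: top_def)

definition conj_K :: "'a list \<Rightarrow> ('a \<Rightarrow> ('p, 'a) fm) \<Rightarrow> ('p, 'a) fm" where
  "conj_K xs f = foldr (\<lambda>i \<theta>. Conj (K i (f i)) \<theta>) xs top"

lemma sat_EL_conj_K: "sat_EL M v (conj_K xs f) \<longleftrightarrow> (\<forall>i\<in>set xs. sat_EL M v (K i (f i)))"
  by (induction xs) (auto simp: conj_K_def)

lemma is_EL_conj_K: "\<forall>i\<in>set xs. is_EL (f i) \<Longrightarrow> is_EL (conj_K xs f)"
  by (induction xs) (auto simp: conj_K_def)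

lemma sat_G_EL_definable:
  assumes "finite G" "EL_family G f"
  obtains \<theta> where "is_EL \<theta>" "\<And>M v. sat_EL M v \<theta> \<longleftrightarrow> sat_G M v G f"
proof -
  obtain xs where "set xs = G"
    using finite_list[OF \<open>finite G\<close>] by blast
  with assms(2) show thesis
    by (intro that[of "conj_K xs f"])
      (auto simp: EL_family_def sat_G_def sat_EL_conj_K is_EL_conj_K simp del: sat_EL.simps(4))
qed

lemma sat_G_Conj: "sat_G M v G (\<lambda>i. Conj (f i) (g i)) \<longleftrightarrow> sat_G M v G f \<and> sat_G M v G g"
  by (auto simp: sat_G_def)

lemma sat_G_top: "sat_G M v G (\<lambda>_. top)"
  by (simp add: sat_G_def)

lemma sat_G_outside_worlds:
  assumes "\<And>a. Rel M a \<subseteq> W M \<times> W M" "v \<notin> W M"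
  shows "sat_G M v G f"
  using assms by (auto simp: sat_G_def)

lemma is_model_Rel_subset: "is_model M \<Longrightarrow> Rel M a \<subseteq> W M \<times> W M"
  unfolding is_model_def equiv_def refl_on_def by blast

lemma restrict_restrict: "restrict (restrict M S) T = restrict M (S \<inter> T)"
  by (auto simp: restrict_def)

text \<open>The reduction axioms of public announcement logic, read as a translation of \<open>[\<theta>]a\<close> for
  epistemic \<open>a\<close>; the dynamic operators never occur there and are mapped to \<open>top\<close>.\<close>

primrec relativize :: "('p, 'a) fm \<Rightarrow> ('p, 'a) fm \<Rightarrow> ('p, 'a) fm" where
  "relativize \<theta> (Atom p) = Imp \<theta> (Atom p)"
| "relativize \<theta> (Neg a) = Imp \<theta> (Neg (relativize \<theta> a))"
| "relativize \<theta> (Conj a b) = Conj (relativize \<theta> a) (relativize \<theta> b)"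
| "relativize \<theta> (K i a) = Imp \<theta> (K i (relativize \<theta> a))"
| "relativize \<theta> (Ann a b) = top"
| "relativize \<theta> (GAnn H a b) = top"
| "relativize \<theta> (CoAnn H a) = top"

lemma is_EL_relativize: "is_EL \<theta> \<Longrightarrow> is_EL a \<Longrightarrow> is_EL (relativize \<theta> a)"
  by (induction a) (auto simp: Imp_def)

lemma sat_EL_relativize:
  "is_EL a \<Longrightarrow> v \<in> W M \<Longrightarrow> sat_EL M v (relativize \<theta> a) \<longleftrightarrow>
    (sat_EL M v \<theta> \<longrightarrow> sat_EL (restrict M {u. sat_EL M u \<theta>}) v a)"
  by (induction a arbitrary: v) (auto simp: Imp_def restrict_def)

lemma sat_G_relativize:
  assumes "is_model M" "EL_family G f" "v \<in> W M" "sat_EL M v \<theta>"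
  shows "sat_G M v G (\<lambda>i. relativize \<theta> (f i)) \<longleftrightarrow> sat_G (restrict M {u. sat_EL M u \<theta>}) v G f"
  using assms is_model_Rel_subset[OF assms(1)]
  by (fastforce simp: sat_G_def EL_family_def sat_EL_relativize restrict_def)

lemma restrict_announce_relativize:
  assumes "is_model M" "EL_family G f"
  shows "restrict M {v. sat_EL M v \<theta> \<and> sat_G M v G (\<lambda>i. relativize \<theta> (f i))} =
    restrict (restrict M {v. sat_EL M v \<theta>}) {v. sat_G (restrict M {u. sat_EL M u \<theta>}) v G f}"
proof -
  let ?M\<^sub>\<theta> = "restrict M {u. sat_EL M u \<theta>}"
  have "sat_G M v G (\<lambda>i. relativize \<theta> (f i)) \<longleftrightarrow> sat_G ?M\<^sub>\<theta> v G f" if "sat_EL M v \<theta>" for v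
  proof (cases "v \<in> W M")
    case True
    with that assms show ?thesis by (simp add: sat_G_relativize)
  next
    case False
    have "\<And>a. Rel ?M\<^sub>\<theta> a \<subseteq> W ?M\<^sub>\<theta> \<times> W ?M\<^sub>\<theta>" "v \<notin> W ?M\<^sub>\<theta>"
      using False by (auto simp: restrict_def)
    with False show ?thesis
      using sat_G_outside_worlds is_model_Rel_subset[OF assms(1)] by metis
  qed
  then have "{v. sat_EL M v \<theta> \<and> sat_G M v G (\<lambda>i. relativize \<theta> (f i))} =
      {v. sat_EL M v \<theta>} \<inter> {v. sat_G ?M\<^sub>\<theta> v G f}"
    by blast
  then show ?thesis
    by (simp add: restrict_restrict)
qed

lemma sat_DCoAnn:
  "sat M w (DCoAnn G \<phi>) \<longleftrightarrow> (\<exists>\<psi>. EL_family G \<psi> \<and>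
     (\<forall>\<chi>. EL_family (- G) \<chi> \<longrightarrow> sat_G M w G \<psi> \<and> (sat_G M w (- G) \<chi> \<longrightarrow>
        sat (restrict M {v. sat_G M v G \<psi> \<and> sat_G M v (- G) \<chi>}) w \<phi>)))"
  by (simp add: DCoAnn_def)

lemma sat_DCoAnn_announcement:
  assumes "sat M w (DCoAnn G \<phi>)"
  obtains \<psi> where "EL_family G \<psi>" "sat_G M w G \<psi>" "sat (restrict M {v. sat_G M v G \<psi>}) w \<phi>"
proof -
  have top: "EL_family (- G) (\<lambda>_. top)"
    by (simp add: EL_family_def)
  from assms obtain \<psi> where EL: "EL_family G \<psi>" and \<psi>: "sat_G M w G \<psi> \<and>
      (sat_G M w (- G) (\<lambda>_. top) \<longrightarrow>
        sat (restrict M {v. sat_G M v G \<psi> \<and> sat_G M v (- G) (\<lambda>_. top)}) w \<phi>)"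
    unfolding sat_DCoAnn using top by blast
  from \<psi> have "sat_G M w G \<psi>" "sat (restrict M {v. sat_G M v G \<psi>}) w \<phi>"
    by (simp_all add: sat_G_top)
  with EL show thesis
    by (rule that)
qed

lemma sat_DCoAnn_DCoAnn_announcement:
  fixes G :: "'a::finite set"
  assumes "is_model M" "w \<in> W M" "sat M w (DCoAnn G (DCoAnn G \<phi>))"
    and "EL_family (- G) \<chi>" "sat_G M w (- G) \<chi>"
  obtains \<psi> where "EL_family G \<psi>" "sat_G M w G \<psi>"
    "sat (restrict M {v. sat_G M v (- G) \<chi> \<and> sat_G M v G \<psi>}) w \<phi>"
proof -
  from assms(3) obtain \<psi>\<^sub>1 where \<psi>\<^sub>1: "EL_family G \<psi>\<^sub>1" "sat_G M w G \<psi>\<^sub>1"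
    and after_\<psi>\<^sub>1: "sat (restrict M {v. sat_G M v G \<psi>\<^sub>1 \<and> sat_G M v (- G) \<chi>}) w (DCoAnn G \<phi>)"
    using assms(4,5) unfolding sat_DCoAnn by blast
  obtain \<theta>\<^sub>1 where \<theta>\<^sub>1: "is_EL \<theta>\<^sub>1" "\<And>v. sat_EL M v \<theta>\<^sub>1 \<longleftrightarrow> sat_G M v G \<psi>\<^sub>1"
    using sat_G_EL_definable[OF finite \<psi>\<^sub>1(1)] by metis
  obtain \<theta>\<^sub>2 where \<theta>\<^sub>2: "is_EL \<theta>\<^sub>2" "\<And>v. sat_EL M v \<theta>\<^sub>2 \<longleftrightarrow> sat_G M v (- G) \<chi>"
    using sat_G_EL_definable[OF finite assms(4)] by metis
  define \<theta> where "\<theta> = Conj \<theta>\<^sub>1 \<theta>\<^sub>2"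
  have \<theta>: "is_EL \<theta>" "\<And>v. sat_EL M v \<theta> \<longleftrightarrow> sat_G M v G \<psi>\<^sub>1 \<and> sat_G M v (- G) \<chi>"
    by (simp_all add: \<theta>_def \<theta>\<^sub>1 \<theta>\<^sub>2)
  let ?M\<^sub>\<theta> = "restrict M {v. sat_EL M v \<theta>}"
  from after_\<psi>\<^sub>1 have "sat ?M\<^sub>\<theta> w (DCoAnn G \<phi>)"
    by (simp add: \<theta>(2))
  then obtain \<psi>\<^sub>2 where \<psi>\<^sub>2: "EL_family G \<psi>\<^sub>2" "sat_G ?M\<^sub>\<theta> w G \<psi>\<^sub>2"
    and after_\<psi>\<^sub>2: "sat (restrict ?M\<^sub>\<theta> {v. sat_G ?M\<^sub>\<theta> v G \<psi>\<^sub>2}) w \<phi>"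
    by (rule sat_DCoAnn_announcement)
  define \<psi> where "\<psi> = (\<lambda>i. Conj (\<psi>\<^sub>1 i) (relativize \<theta> (\<psi>\<^sub>2 i)))"
  have merged: "{v. sat_G M v (- G) \<chi> \<and> sat_G M v G \<psi>} =
      {v. sat_EL M v \<theta> \<and> sat_G M v G (\<lambda>i. relativize \<theta> (\<psi>\<^sub>2 i))}"
    by (auto simp: \<psi>_def sat_G_Conj \<theta>(2))
  show thesis
  proof
    show "EL_family G \<psi>"
      using \<psi>\<^sub>1(1) \<psi>\<^sub>2(1) \<theta>(1) by (simp add: EL_family_def \<psi>_def is_EL_relativize)
    show "sat (restrict M {v. sat_G M v (- G) \<chi> \<and> sat_G M v G \<psi>}) w \<phi>"
      using after_\<psi>\<^sub>2 by (simp add: merged restrict_announce_relativize assms(1) \<psi>\<^sub>2(1))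
    show "sat_G M w G \<psi>"
      using \<psi>\<^sub>1(2) \<psi>\<^sub>2 assms(1,2,5)
      by (simp add: \<psi>_def sat_G_Conj sat_G_relativize \<theta>(2))
  qed
qed

theorem mainTheorem5:
  fixes G :: "('a::finite) set" and \<phi> :: "('p::countable, 'a) fm"
  shows "valid TYPE('w) (Imp (DCoAnn G (DCoAnn G \<phi>)) (CoAnn (- G) \<phi>))"
  unfolding valid_def
proof (intro allI impI)
  fix M :: "('w, 'a, 'p) kmodel" and w
  assume "is_model M \<and> w \<in> W M"
  then have M: "is_model M" "w \<in> W M" by auto
  have "sat M w (CoAnn (- G) \<phi>)" if "sat M w (DCoAnn G (DCoAnn G \<phi>))"
  proof (simp only: sat.simps double_compl, intro allI impI)
    fix \<chi> :: "'a \<Rightarrow> ('p, 'a) fm" assume \<chi>: "EL_family (- G) \<chi>"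
    show "\<exists>\<psi>. EL_family G \<psi> \<and> (sat_G M w (- G) \<chi> \<longrightarrow> sat_G M w (- G) \<chi> \<and> sat_G M w G \<psi> \<and>
        sat (restrict M {v. sat_G M v (- G) \<chi> \<and> sat_G M v G \<psi>}) w \<phi>)"
    proof (cases "sat_G M w (- G) \<chi>")
      case True
      with M that \<chi> show ?thesis
        by (elim sat_DCoAnn_DCoAnn_announcement) auto
    next
      case False
      then show ?thesis by (intro exI[of _ "\<lambda>_. top"]) (simp add: EL_family_def)
    qed
  qed
  then show "sat M w (Imp (DCoAnn G (DCoAnn G \<phi>)) (CoAnn (- G) \<phi>))"
    by (simp add: Imp_def del: sat.simps(7))
qed

end
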